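(* Consider the algorithm described in the context, suppose it does not terminate finitely, and suppose there is $\sigma_{\min}>0$ with $\sigma_{\min}(J_k)\ge\sigma_{\min}$ for all $k\in\mathbb{N}$. Then any limit point $x_*$ of the sequence $\{x_k\}$ is a first-order KKT point of the problem, i.e., $c(x_* )=0$ and there exist $y_*\in\mathbb{R}^m$ and $g_{r,*}\in\partial r(x_* )$ such that $\nabla f(x_* )+g_{r,*}-J(x_* )^Ty_*=0$.
   Context: Problem: $\min_{x\in\mathbb{R}^n} f(x)+r(x)$ subject to $c(x)=0$, where $f:\mathbb{R}^n\to\mathbb{R}$ and $c:\mathbb{R}^n\to\mathbb{R}^m$ ($m\le n$) are continuously differentiable and $r:\mathbb{R}^n\to\mathbb{R}_{\ge 0}$ is convex. Write $g(x)=\nabla f(x)$, $J(x)=\nabla c(x)^T$, and $f_k=f(x_k)$, $g_k=g(x_k)$, $c_k=c(x_k)$, $J_k=J(x_k)$, $r_k=r(x_k)$. All norms are Euclidean. Merit function: $\Phi_\tau(x)=\tau(f(x)+r(x))+\|c(x)\|_2$. Algorithm: inputs $x_0$, $\alpha_0>0$, $\tau_{-1}>0$; constants $\kappa_v>0$, $\sigma_c,\epsilon_\tau,\xi,\eta\in(0,1)$, $\sigma_u\in(0,1/2]$, $\bar\sigma_u:=\sigma_u+\tfrac12$. For $k=0,1,\dots$: 1. If $J_k^Tc_k\ne0$, compute $v_k$ with $v_k\in\mathrm{Range}(J_k^T)$, $\|v_k\|_2\le\kappa_v\alpha_k\|J_k^Tc_k\|_2$, $\|c_k+J_kv_k\|_2\le\|c_k+J_kv_k^c\|_2$,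 where $v_k^c=-\beta_k^cJ_k^Tc_k$ with $\beta_k^c$ minimizing $\tfrac12\|c_k-\beta J_kJ_k^Tc_k\|_2^2$ over $0\le\beta\le\kappa_v\alpha_k$. Otherwise set $v_k=0$, and if $c_k\ne0$ terminate. 2. Let $u_k$ be the unique minimizer of $g_k^Tu+\tfrac1{2\alpha_k}\|u\|_2^2+r(x_k+v_k+u)$ subject to $J_ku=0$; set $s_k=v_k+u_k$. If $s_k=0$, terminate. 3. Let $D_k:=g_k^Ts_k+\bar\sigma_u\|s_k\|_2^2/\alpha_k+r(x_k+s_k)-r_k$; $\tau_{k,\mathrm{trial}}=\infty$ if $D_k\le0$, else $\tau_{k,\mathrm{trial}}=(1-\sigma_c)(\|c_k\|_2-\|c_k+J_kv_k\|_2)/D_k$. Set $\tau_k=\tau_{k-1}$ if $\tau_{k-1}\le\tau_{k,\mathrm{trial}}$, else $\tau_k=\min\{(1-\epsilon_\tau)\tau_{k-1},\tau_{k,\mathrm{trial}}\}$. 4. With $\Delta q_k(s,\tau):=-\tau(g_k^Ts+\tfrac1{2\alpha_k}\|s\|_2^2+r(x_k+s)-r_k)+\|c_k\|_2-\|c_k+J_ks\|_2$: if $\Phi_{\tau_k}(x_k+s_k)\le\Phi_{\tau_k}(x_k)-\eta\Delta q_k(s_k,\tau_k)$ set $x_{k+1}=x_k+s_k$, $\alpha_{k+1}=\alpha_k$; else $x_{k+1}=x_k$, $\alpha_{k+1}=\xi\alpha_k$. Assumption: there is an open convex set $\mathcal X$ containing all iterates $x_k$ and trial points $x_k+s_k$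 such that $f$ is bounded below on $\mathcal X$, $\nabla f$ is bounded and Lipschitz continuous on $\mathcal X$, $c$ is bounded on $\mathcal X$, $J$ is bounded and Lipschitz continuous on $\mathcal X$, and all subgradients of $r$ at points of $\mathcal X$ are uniformly bounded in norm. *)

theory Defs
  imports "HOL-Analysis.Analysis"
begin

definition subdiff :: "(real^'n \<Rightarrow> real) \<Rightarrow> real^'n \<Rightarrow> (real^'n) set" where
  "subdiff r x = {gr. \<forall>y. r y \<ge> r x + gr \<bullet> (y - x)}"

(* Smallest singular value of an m x n matrix J with m <= n:
   sigma_min(J) = min over unit y in R^m of ||J^T y||  (= sqrt of the smallest
   eigenvalue of J J^T, i.e. the m-th largest singular value). *)
definition sigma_min_sv :: "real^'n^'m \<Rightarrow> real" where
  "sigma_min_sv J = Inf {norm (transpose J *v y) | y. norm y = 1}"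

definition merit :: "(real^'n \<Rightarrow> real) \<Rightarrow> (real^'n \<Rightarrow> real) \<Rightarrow> (real^'n \<Rightarrow> real^'m)
                     \<Rightarrow> real \<Rightarrow> real^'n \<Rightarrow> real" where
  "merit f r c \<tau> x = \<tau> * (f x + r x) + norm (c x)"

definition dq :: "(real^'n \<Rightarrow> real) \<Rightarrow> (real^'n \<Rightarrow> real^'m) \<Rightarrow> real^'n \<Rightarrow> real^'n
                  \<Rightarrow> real^'n^'m \<Rightarrow> real \<Rightarrow> real^'n \<Rightarrow> real \<Rightarrow> real" where
  "dq r c xk gk Jk ak s \<tau> =
     - \<tau> * (gk \<bullet> s + norm s ^ 2 / (2 * ak) + r (xk + s) - r xk)
     + norm (c xk) - norm (c xk + Jk *v s)"

end

(* Each step splits into a normal part v k in the range of J^T, at least as good for the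
   linearized constraint as a Cauchy step, and a tangential part u k in the null space of J
   solving a proximal subproblem. Since sigma_min(J) is bounded below, the normal decrease
   dominates the norm of J^T c and hence of c, which keeps the merit parameter tau bounded away
   from 0. Lipschitz continuity of g and J then forces acceptance once alpha is small, so alpha
   stays bounded away from 0 and eventually every step is accepted. The merit function, shifted
   to be nonnegative, then decreases by eta times the model reduction, so the model reduction
   tends to 0, and with it the steps and the constraint violation. Finally the optimality
   conditions of the subproblems supply multipliers and subgradients that are bounded (again by
   sigma_min); along a convergent subsequence they become KKT multipliers at the limit point. *)

theory Submission
  imports Defs
begin

(* The library rewrites transpose A *v y to y v* A; we keep the form used in the statement. *)
declare transpose_matrix_vector [simp del]

section \<open>Matrices and their transposes\<close>

lemma inner_transpose_matrix_vector:
  fixes A :: "real^'n^'m"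
  shows "(transpose A *v y) \<bullet> x = y \<bullet> (A *v x)"
  by (simp add: transpose_matrix_vector dot_lmul_matrix)

lemma matrix_vector_mult_norm_le:
  fixes A :: "real^'n^'m"
  shows "norm (A *v x) \<le> norm A * norm x"
proof -
  have "norm (A *v x) \<le> norm (norm x *\<^sub>R (\<chi> i. norm (A $ i)))"
  proof (rule norm_le_componentwise_cart)
    fix i
    have "(A *v x) $ i = A $ i \<bullet> x"
      by (simp add: matrix_vector_mult_def inner_vec_def)
    then show "norm ((A *v x) $ i) \<le> norm ((norm x *\<^sub>R (\<chi> i. norm (A $ i))) $ i)"
      using Cauchy_Schwarz_ineq2[of "A $ i" x] by (simp add: mult.commute)
  qed
  moreover have "norm (\<chi> i. norm (A $ i)) = norm A"
    by (simp add: norm_vec_def)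
  ultimately show ?thesis
    by (simp add: mult.commute)
qed

lemma norm_transpose [simp]:
  fixes A :: "real^'n^'m"
  shows "norm (transpose A) = norm A"
proof -
  have "transpose A \<bullet> transpose A = (\<Sum>j\<in>UNIV. \<Sum>i\<in>UNIV. A $ i $ j * A $ i $ j)"
    by (simp add: inner_vec_def transpose_def)
  also have "\<dots> = A \<bullet> A"
    by (subst sum.swap) (simp add: inner_vec_def)
  finally show ?thesis
    by (simp add: norm_eq_sqrt_inner)
qed

lemma bounded_linear_transpose: "bounded_linear (transpose :: real^'n^'m \<Rightarrow> real^'m^'n)"
proof (rule bounded_linear_intro[where K = 1])
  show "norm (transpose A) \<le> norm A * 1" for A :: "real^'n^'m"
    by simp
qed (simp_all add: transpose_def vec_eq_iff)

lemma bounded_bilinear_matrix_vector_mult: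
  "bounded_bilinear ((*v) :: real^'n^'m \<Rightarrow> real^'n \<Rightarrow> real^'m)"
proof
  show "\<exists>K. \<forall>(A :: real^'n^'m) x. norm (A *v x) \<le> norm A * norm x * K"
    by (intro exI[of _ 1] allI) (simp add: matrix_vector_mult_norm_le)
qed (auto simp: matrix_vector_right_distrib matrix_vector_mult_add_rdistrib
        matrix_vector_mult_scaleR scaleR_matrix_vector_assoc)

lemma tendsto_transpose_matrix_vector_mult:
  fixes A :: "nat \<Rightarrow> real^'n^'m" and y :: "nat \<Rightarrow> real^'m"
  assumes "A \<longlonglongrightarrow> A0" and "y \<longlonglongrightarrow> y0"
  shows "(\<lambda>j. transpose (A j) *v y j) \<longlonglongrightarrow> transpose A0 *v y0"
  using bounded_bilinear.tendsto[OF bounded_bilinear_matrix_vector_mult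
      bounded_linear.tendsto[OF bounded_linear_transpose assms(1)] assms(2)] .

lemma sigma_min_sv_le:
  fixes A :: "real^'n^'m"
  shows "sigma_min_sv A * norm y \<le> norm (transpose A *v y)"
proof (cases "y = 0")
  case False
  have "sigma_min_sv A \<le> norm (transpose A *v ((1 / norm y) *\<^sub>R y))"
    unfolding sigma_min_sv_def using False by (intro cInf_lower bdd_belowI[of _ 0]) auto
  also have "\<dots> = norm (transpose A *v y) / norm y"
    by (simp add: matrix_vector_mult_scaleR)
  finally show ?thesis
    using False by (simp add: le_divide_eq)
qed simp

lemma orthogonal_null_space_imp_range_transpose:
  fixes A :: "real^'n^'m"
  assumes "\<And>w. A *v w = 0 \<Longrightarrow> p \<bullet> w = 0"
  shows "\<exists>y. p = transpose A *v y"
proof -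
  let ?R = "range (\<lambda>y. transpose A *v y)"
  have "subspace ?R"
    by (rule linear_subspace_image[OF matrix_vector_mul_linear subspace_UNIV])
  then obtain a b where a: "a \<in> ?R" and b: "\<And>w. w \<in> ?R \<Longrightarrow> orthogonal b w" and p: "p = a + b"
    using orthogonal_subspace_decomp_exists[of ?R p] by (metis span_eq_iff)
  have "orthogonal b (transpose A *v (A *v b))"
    using b by simp
  then have "(A *v b) \<bullet> (A *v b) = 0"
    by (simp add: orthogonal_def inner_commute[of b] inner_transpose_matrix_vector)
  then have "p \<bullet> b = 0"
    using assms by simp
  moreover have "a \<bullet> b = 0"
    using a b by (metis orthogonal_def inner_commute)
  ultimately have "b = 0"
    using p by (simp add: inner_add_left)
  then show ?thesis
    using a p by auto
qed

section \<open>Convex minimization over a null space\<close>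

lemma convex_strict_epigraph:
  assumes "convex_on UNIV \<phi>"
  shows "convex {z. \<phi> (fst z) < snd z}"
  unfolding convex_def
proof (clarsimp)
  fix a b :: 'a and s t u v :: real
  assume "\<phi> a < s" "\<phi> b < t" "0 \<le> u" "0 \<le> v" "u + v = 1"
  moreover from this have "\<phi> (u *\<^sub>R a + v *\<^sub>R b) \<le> u * \<phi> a + v * \<phi> b"
    using assms by (simp add: convex_on_def)
  moreover have "u * \<phi> a + v * \<phi> b < u * s + v * t"
  proof (cases "u = 0")
    case False
    with calculation have "u * \<phi> a < u * s" "v * \<phi> b \<le> v * t"
      by (simp_all add: mult_left_mono)
    then show ?thesis
      by linarith
  qed (use calculation in simp)
  ultimately show "\<phi> (u *\<^sub>R a + v *\<^sub>R b) < u * s + v * t"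
    by linarith
qed

lemma strict_epigraph_separation:
  fixes \<phi> :: "real^'n \<Rightarrow> real" and A :: "real^'n^'m"
  assumes "convex_on UNIV \<phi>"
    and min: "\<And>w. A *v w = 0 \<Longrightarrow> \<phi> 0 \<le> \<phi> w"
  obtains p \<beta> b where "(p, \<beta>) \<noteq> 0"
    and "\<And>w t. \<phi> w - \<phi> 0 < t \<Longrightarrow> p \<bullet> w + \<beta> * t \<le> b"
    and "\<And>w. A *v w = 0 \<Longrightarrow> b \<le> p \<bullet> w"
proof -
  define S where "S = {z :: (real^'n) \<times> real. \<phi> (fst z) - \<phi> 0 < snd z}"
  define T where "T = {z :: (real^'n) \<times> real. A *v fst z = 0 \<and> snd z = 0}"
  have "convex_on UNIV (\<lambda>w. \<phi> w - \<phi> 0)"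
    using convex_on_diff[OF assms(1), of "\<lambda>_. \<phi> 0"] by (simp add: concave_on_const)
  then have "convex S"
    unfolding S_def by (rule convex_strict_epigraph)
  moreover have "convex T"
    unfolding convex_def T_def by (simp add: matrix_vector_right_distrib matrix_vector_mult_scaleR)
  moreover have "(0, 1) \<in> S" "(0, 0) \<in> T"
    by (simp_all add: S_def T_def)
  then have "S \<noteq> {}" "T \<noteq> {}"
    by blast+
  moreover have "z \<notin> S" if "z \<in> T" for z
    using that min[of "fst z"] by (simp add: S_def T_def)
  then have "S \<inter> T = {}"
    by blast
  ultimately obtain a b where "a \<noteq> 0" and aS: "\<forall>z\<in>S. a \<bullet> z \<le> b" and aT: "\<forall>z\<in>T. b \<le> a \<bullet> z"
    using separating_hyperplane_sets[of S T] by blast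
  obtain p \<beta> where a: "a = (p, \<beta>)"
    by (cases a)
  show ?thesis
  proof
    show "(p, \<beta>) \<noteq> 0"
      using \<open>a \<noteq> 0\<close> by (simp add: a)
    show "p \<bullet> w + \<beta> * t \<le> b" if "\<phi> w - \<phi> 0 < t" for w t
      using aS that by (force simp: a S_def)
    show "b \<le> p \<bullet> w" if "A *v w = 0" for w
      using aT that by (force simp: a T_def)
  qed
qed

lemma inner_eq_0_if_bounded_below_on_null_space:
  fixes A :: "real^'n^'m"
  assumes "\<And>w. A *v w = 0 \<Longrightarrow> b \<le> p \<bullet> w" and "A *v w = 0"
  shows "p \<bullet> w = 0"
proof (rule ccontr)
  assume "p \<bullet> w \<noteq> 0"
  then have "p \<bullet> (((b - 1) / (p \<bullet> w)) *\<^sub>R w) = b - 1"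
    by simp
  moreover have "A *v (((b - 1) / (p \<bullet> w)) *\<^sub>R w) = 0"
    using assms(2) by (simp add: matrix_vector_mult_scaleR)
  ultimately show False
    using assms(1) by fastforce
qed

text \<open>A Lagrange multiplier rule: separating the strict epigraph of \<open>\<phi> - \<phi> 0\<close> from the null space
  gives a normal \<open>(p, \<beta>)\<close> with \<open>\<beta> < 0\<close>, and \<open>-p/\<beta>\<close> is a subgradient orthogonal to the null space.\<close>
lemma null_space_minimizer_multiplier:
  fixes \<phi> :: "real^'n \<Rightarrow> real" and A :: "real^'n^'m"
  assumes "convex_on UNIV \<phi>"
    and min: "\<And>w. A *v w = 0 \<Longrightarrow> \<phi> 0 \<le> \<phi> w"
  shows "\<exists>y. \<forall>w. \<phi> 0 + (transpose A *v y) \<bullet> w \<le> \<phi> w"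
proof -
  obtain p \<beta> b where "(p, \<beta>) \<noteq> 0"
    and S: "\<And>w t. \<phi> w - \<phi> 0 < t \<Longrightarrow> p \<bullet> w + \<beta> * t \<le> b"
    and T: "\<And>w. A *v w = 0 \<Longrightarrow> b \<le> p \<bullet> w"
    using strict_epigraph_separation[OF assms] by blast
  have "b \<le> 0"
    using T[of 0] by simp
  have "\<beta> < 0"
  proof -
    have "\<beta> \<le> 0"
      using S[of 0 1] \<open>b \<le> 0\<close> by simp
    moreover have "\<beta> \<noteq> 0"
    proof
      assume "\<beta> = 0"
      then have "p \<bullet> p \<le> 0"
        using S[of p "\<phi> p - \<phi> 0 + 1"] \<open>b \<le> 0\<close> by simp
      then have "p = 0"
        by (metis inner_eq_zero_iff inner_ge_zero order_antisym)
      then show False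
        using \<open>(p, \<beta>) \<noteq> 0\<close> \<open>\<beta> = 0\<close> by (simp add: zero_prod_def)
    qed
    ultimately show ?thesis
      by simp
  qed
  have "((-1 / \<beta>) *\<^sub>R p) \<bullet> w = 0" if "A *v w = 0" for w
    using inner_eq_0_if_bounded_below_on_null_space[OF T that] by simp
  then obtain y where y: "(-1 / \<beta>) *\<^sub>R p = transpose A *v y"
    using orthogonal_null_space_imp_range_transpose by blast
  have "\<phi> 0 + ((-1 / \<beta>) *\<^sub>R p) \<bullet> w \<le> \<phi> w" for w
  proof (rule field_le_epsilon)
    fix e :: real
    assume "0 < e"
    then have "p \<bullet> w + \<beta> * (\<phi> w - \<phi> 0 + e) \<le> 0"
      using S[of w "\<phi> w - \<phi> 0 + e"] \<open>b \<le> 0\<close> by simp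
    then show "\<phi> 0 + ((-1 / \<beta>) *\<^sub>R p) \<bullet> w \<le> \<phi> w + e"
      using \<open>\<beta> < 0\<close> by (simp add: field_simps)
  qed
  then show ?thesis
    using y by metis
qed

lemma nonneg_if_nonneg_add_small_multiples:
  fixes E K :: real
  assumes "\<And>t. 0 < t \<Longrightarrow> t \<le> 1 \<Longrightarrow> 0 \<le> E + t * K"
  shows "0 \<le> E"
proof (rule tendsto_lowerbound)
  show "((\<lambda>t. E + t * K) \<longlongrightarrow> E) (at_right 0)"
    by (auto intro!: tendsto_eq_intros)
  show "\<forall>\<^sub>F t in at_right 0. 0 \<le> E + t * K"
    using eventually_at_right_real[OF zero_less_one] by (rule eventually_mono) (use assms in auto)
qed simp

lemma convex_on_inner_add_shift:
  assumes "convex_on UNIV r"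
  shows "convex_on UNIV (\<lambda>w. q \<bullet> w + r (z + w))"
proof (rule convex_on_add)
  show "convex_on UNIV (\<lambda>w. q \<bullet> w)"
    by (simp add: convex_on_def inner_add_right)
  show "convex_on UNIV (\<lambda>w. r (z + w))"
  proof -
    have "z + (u *\<^sub>R a + v *\<^sub>R b) = u *\<^sub>R (z + a) + v *\<^sub>R (z + b)" if "u + v = 1" for u v :: real and a b
      using that by (simp add: algebra_simps flip: scaleR_add_left)
    then show ?thesis
      using assms by (simp add: convex_on_def)
  qed
qed

lemma prox_subproblem_first_order:
  fixes A :: "real^'n^'m" and r :: "real^'n \<Rightarrow> real"
  assumes r: "convex_on UNIV r" and "0 < a" and "A *v u = 0" and "A *v w = 0"
    and opt: "\<And>w. A *v w = 0 \<Longrightarrow>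
        q \<bullet> u + norm u ^ 2 / (2 * a) + r (z + u) \<le> q \<bullet> w + norm w ^ 2 / (2 * a) + r (z + w)"
  shows "r (z + u) \<le> (q + (1 / a) *\<^sub>R u) \<bullet> w + r (z + u + w)"
proof -
  define E where "E = (q + (1 / a) *\<^sub>R u) \<bullet> w + r (z + u + w) - r (z + u)"
  (* compare u with u + t w and let t tend to 0 *)
  have "0 \<le> E + t * (norm w ^ 2 / (2 * a))" if t: "0 < t" "t \<le> 1" for t
  proof -
    have "A *v (u + t *\<^sub>R w) = 0"
      using \<open>A *v u = 0\<close> \<open>A *v w = 0\<close> by (simp add: matrix_vector_right_distrib matrix_vector_mult_scaleR)
    then have "q \<bullet> u + norm u ^ 2 / (2 * a) + r (z + u)
        \<le> q \<bullet> (u + t *\<^sub>R w) + norm (u + t *\<^sub>R w) ^ 2 / (2 * a) + r (z + (u + t *\<^sub>R w))"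
      by (rule opt)
    moreover have "r (z + (u + t *\<^sub>R w)) \<le> (1 - t) * r (z + u) + t * r (z + u + w)"
      using convex_onD[OF r, of t "z + u" "z + u + w"] t by (simp add: algebra_simps)
    moreover have "norm (u + t *\<^sub>R w) ^ 2 = norm u ^ 2 + 2 * t * (u \<bullet> w) + t\<^sup>2 * norm w ^ 2"
      unfolding power2_norm_eq_inner by (simp add: inner_add_left inner_add_right inner_commute power2_eq_square)
    then have "q \<bullet> (u + t *\<^sub>R w) + norm (u + t *\<^sub>R w) ^ 2 / (2 * a)
          + ((1 - t) * r (z + u) + t * r (z + u + w)) - (q \<bullet> u + norm u ^ 2 / (2 * a) + r (z + u))
        = t * (E + t * (norm w ^ 2 / (2 * a)))"
      using \<open>0 < a\<close> by (simp add: E_def inner_add_left inner_add_right field_simps power2_eq_square)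
    ultimately have "0 \<le> t * (E + t * (norm w ^ 2 / (2 * a)))"
      by linarith
    then show ?thesis
      using t by (simp add: zero_le_mult_iff)
  qed
  then have "0 \<le> E"
    by (rule nonneg_if_nonneg_add_small_multiples)
  then show ?thesis
    by (simp add: E_def)
qed

lemma prox_subproblem_multiplier:
  fixes A :: "real^'n^'m" and r :: "real^'n \<Rightarrow> real"
  assumes r: "convex_on UNIV r" and "0 < a" and "A *v u = 0"
    and opt: "\<And>w. A *v w = 0 \<Longrightarrow>
        q \<bullet> u + norm u ^ 2 / (2 * a) + r (z + u) \<le> q \<bullet> w + norm w ^ 2 / (2 * a) + r (z + w)"
  shows "\<exists>y. \<exists>gr \<in> subdiff r (z + u). q + (1 / a) *\<^sub>R u + gr = transpose A *v y"
proof -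
  define q' where "q' = q + (1 / a) *\<^sub>R u"
  define \<phi> where "\<phi> w = q' \<bullet> w + r (z + u + w)" for w
  have "\<phi> 0 \<le> \<phi> w" if "A *v w = 0" for w
    using prox_subproblem_first_order[OF assms(1-3) that opt] by (simp add: \<phi>_def q'_def)
  moreover have "convex_on UNIV \<phi>"
    unfolding \<phi>_def by (rule convex_on_inner_add_shift[OF r])
  ultimately obtain y where y: "\<And>w. \<phi> 0 + (transpose A *v y) \<bullet> w \<le> \<phi> w"
    using null_space_minimizer_multiplier by blast
  have "transpose A *v y - q' \<in> subdiff r (z + u)"
    unfolding subdiff_def using y[of "_ - (z + u)"] by (simp add: \<phi>_def inner_diff_left algebra_simps)
  moreover have "q + (1 / a) *\<^sub>R u + (transpose A *v y - q') = transpose A *v y"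
    by (simp add: q'_def)
  ultimately show ?thesis
    by blast
qed

lemma subdiff_limit:
  assumes "isCont r z" and "zs \<longlonglongrightarrow> z" and "grs \<longlonglongrightarrow> gr"
    and "\<And>j. grs j \<in> subdiff r (zs j)"
  shows "gr \<in> subdiff r z"
  unfolding subdiff_def
proof (intro CollectI allI)
  fix y
  have "(\<lambda>j. r (zs j) + grs j \<bullet> (y - zs j)) \<longlonglongrightarrow> r z + gr \<bullet> (y - z)"
    using assms by (intro tendsto_intros isCont_tendsto_compose[of z r])
  moreover have "\<And>j. r (zs j) + grs j \<bullet> (y - zs j) \<le> r y"
    using assms(4) by (simp add: subdiff_def)
  ultimately show "r z + gr \<bullet> (y - z) \<le> r y"
    by (intro LIMSEQ_le_const2) auto
qed

section \<open>Linearization and Cauchy-step estimates\<close>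

lemma lipschitz_on_max_0:
  assumes "\<forall>y\<in>X. \<forall>z\<in>X. norm (F y - F z) \<le> L * norm (y - z)"
  shows "(max 0 L)-lipschitz_on X F"
proof (rule lipschitz_onI)
  fix y z
  assume "y \<in> X" "z \<in> X"
  then have "norm (F y - F z) \<le> L * norm (y - z)"
    using assms by blast
  also have "\<dots> \<le> max 0 L * norm (y - z)"
    by (intro mult_right_mono) simp_all
  finally show "dist (F y) (F z) \<le> max 0 L * dist y z"
    by (simp add: dist_norm)
qed simp

lemma linearization_error_le:
  fixes F :: "'a::euclidean_space \<Rightarrow> 'b::real_normed_vector"
  assumes "convex X" "x \<in> X" "y \<in> X" "0 \<le> L"
    and deriv: "\<And>z. z \<in> X \<Longrightarrow> (F has_derivative F' z) (at z)"
    and lip: "\<And>z. z \<in> X \<Longrightarrow> onorm (\<lambda>h. F' z h - F' x h) \<le> L * norm (z - x)"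
  shows "norm (F y - F x - F' x (y - x)) \<le> L * norm (y - x) ^ 2"
proof -
  have seg: "closed_segment x y \<subseteq> X"
    using assms by (simp add: closed_segment_subset)
  have "norm (F y - F x - F' x (y - x)) \<le> norm (y - x) * (L * norm (y - x))"
  proof (rule differentiable_bound_linearization[where S = "closed_segment x y"])
    show "x + t *\<^sub>R (y - x) \<in> closed_segment x y" if "t \<in> {0..1}" for t
      using that by (auto simp: in_segment algebra_simps intro!: exI[of _ t])
    show "(F has_derivative F' z) (at z within closed_segment x y)" if "z \<in> closed_segment x y" for z
      using deriv seg that by (blast intro: has_derivative_at_withinI)
    show "onorm (F' z - F' x) \<le> L * norm (y - x)" if "z \<in> closed_segment x y" for z
    proof -
      have "onorm (F' z - F' x) \<le> L * norm (z - x)"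
        using lip[of z] seg that by (simp add: fun_diff_def subset_iff)
      also have "\<dots> \<le> L * norm (y - x)"
        using dist_in_closed_segment[OF that] \<open>0 \<le> L\<close>
        by (intro mult_left_mono) (simp_all add: dist_norm norm_minus_commute)
      finally show ?thesis .
    qed
  qed simp
  then show ?thesis
    by (simp add: power2_eq_square mult_ac)
qed

lemma norm_cauchy_step_le:
  fixes A :: "real^'n^'m"
  assumes "0 \<le> \<beta>" and "\<beta> * norm A ^ 2 \<le> 1"
  shows "norm (c - \<beta> *\<^sub>R (A *v (transpose A *v c))) ^ 2 \<le> norm c ^ 2 - \<beta> * norm (transpose A *v c) ^ 2"
proof -
  let ?w = "transpose A *v c"
  have "c \<bullet> (A *v ?w) = norm ?w ^ 2"
    by (simp add: power2_norm_eq_inner inner_transpose_matrix_vector inner_commute)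
  then have "norm (c - \<beta> *\<^sub>R (A *v ?w)) ^ 2 = norm c ^ 2 - 2 * \<beta> * norm ?w ^ 2 + \<beta>\<^sup>2 * norm (A *v ?w) ^ 2"
    unfolding power2_norm_eq_inner by (simp add: inner_diff_left inner_diff_right inner_commute power2_eq_square)
  moreover have "norm (A *v ?w) ^ 2 \<le> norm A ^ 2 * norm ?w ^ 2"
    by (metis matrix_vector_mult_norm_le norm_ge_zero power_mono power_mult_distrib)
  then have "\<beta>\<^sup>2 * norm (A *v ?w) ^ 2 \<le> \<beta> * (\<beta> * norm A ^ 2) * norm ?w ^ 2"
    using \<open>0 \<le> \<beta>\<close> by (simp add: power2_eq_square mult_left_mono mult_ac)
  moreover have "\<beta> * (\<beta> * norm A ^ 2) * norm ?w ^ 2 \<le> \<beta> * norm ?w ^ 2"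
    using assms by (intro mult_right_mono mult_left_le) simp_all
  ultimately show ?thesis
    by linarith
qed

lemma decrease_ge_if_sq_decrease_ge:
  fixes a b \<beta> \<sigma> w :: real
  assumes "b\<^sup>2 \<le> a\<^sup>2 - \<beta> * w\<^sup>2" and "0 \<le> b" "b \<le> a" "0 < a"
    and "\<sigma> * a \<le> w" "0 \<le> w" "0 \<le> \<beta>"
  shows "\<beta> * \<sigma> * w \<le> 2 * (a - b)"
proof -
  have "(a - b) * (a + b) \<le> (a - b) * (2 * a)"
    using assms by (intro mult_left_mono) simp_all
  then have "\<beta> * w\<^sup>2 \<le> a * (2 * (a - b))"
    using assms(1) by (simp add: power2_eq_square algebra_simps)
  moreover have "\<beta> * (\<sigma> * a) * w \<le> \<beta> * w * w"
    using assms by (intro mult_right_mono mult_left_mono) simp_all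
  ultimately have "a * (\<beta> * \<sigma> * w) \<le> a * (2 * (a - b))"
    by (simp add: power2_eq_square mult_ac)
  then show ?thesis
    using \<open>0 < a\<close> by (rule mult_left_le_imp_le)
qed

lemma normal_step_properties:
  fixes A :: "real^'n^'m"
  assumes nondegenerate: "transpose A *v c \<noteq> 0 \<Longrightarrow>
        (\<exists>w. v = transpose A *v w)
      \<and> norm v \<le> \<delta> * norm (transpose A *v c)
      \<and> (\<exists>\<beta>c. 0 \<le> \<beta>c \<and> \<beta>c \<le> \<delta>
           \<and> (\<forall>\<beta>. 0 \<le> \<beta> \<and> \<beta> \<le> \<delta> \<longrightarrow>
                 (1/2) * norm (c - \<beta>c *\<^sub>R (A *v (transpose A *v c))) ^ 2
               \<le> (1/2) * norm (c - \<beta> *\<^sub>R (A *v (transpose A *v c))) ^ 2)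
           \<and> norm (c + A *v v) \<le> norm (c + A *v (- \<beta>c *\<^sub>R (transpose A *v c))))"
    and degenerate: "transpose A *v c = 0 \<Longrightarrow> v = 0 \<and> c = 0"
  shows "\<exists>w. v = transpose A *v w"
    and "norm v \<le> \<delta> * norm (transpose A *v c)"
    and "\<And>\<beta>. 0 \<le> \<beta> \<Longrightarrow> \<beta> \<le> \<delta> \<Longrightarrow> norm (c + A *v v) \<le> norm (c - \<beta> *\<^sub>R (A *v (transpose A *v c)))"
proof -
  show "\<exists>w. v = transpose A *v w"
  proof (cases "transpose A *v c = 0")
    case True
    then have "v = transpose A *v 0"
      using degenerate by simp
    then show ?thesis ..
  qed (use nondegenerate in blast)
  show "norm v \<le> \<delta> * norm (transpose A *v c)"
    using nondegenerate degenerate by (cases "transpose A *v c = 0") simp_all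
next
  fix \<beta> :: real
  assume \<beta>: "0 \<le> \<beta>" "\<beta> \<le> \<delta>"
  show "norm (c + A *v v) \<le> norm (c - \<beta> *\<^sub>R (A *v (transpose A *v c)))"
  proof (cases "transpose A *v c = 0")
    case False
    then obtain \<beta>c where
      opt: "\<forall>\<beta>. 0 \<le> \<beta> \<and> \<beta> \<le> \<delta> \<longrightarrow>
          (1/2) * norm (c - \<beta>c *\<^sub>R (A *v (transpose A *v c))) ^ 2
        \<le> (1/2) * norm (c - \<beta> *\<^sub>R (A *v (transpose A *v c))) ^ 2"
      and v: "norm (c + A *v v) \<le> norm (c + A *v (- \<beta>c *\<^sub>R (transpose A *v c)))"
      using nondegenerate by blast
    have "c + A *v (- \<beta>c *\<^sub>R (transpose A *v c)) = c - \<beta>c *\<^sub>R (A *v (transpose A *v c))"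
      unfolding matrix_vector_mult_scaleR by simp
    with v have "norm (c + A *v v) \<le> norm (c - \<beta>c *\<^sub>R (A *v (transpose A *v c)))"
      by simp
    also have "\<dots> \<le> norm (c - \<beta> *\<^sub>R (A *v (transpose A *v c)))"
    proof (rule power2_le_imp_le)
      show "norm (c - \<beta>c *\<^sub>R (A *v (transpose A *v c))) ^ 2 \<le> norm (c - \<beta> *\<^sub>R (A *v (transpose A *v c))) ^ 2"
        using opt \<beta> by simp
    qed simp
    finally show ?thesis .
  qed (use degenerate in simp)
qed

section \<open>A run of the algorithm\<close>

locale prox_sqp_run =
  fixes f :: "real^'n \<Rightarrow> real" and g :: "real^'n \<Rightarrow> real^'n"
    and c :: "real^'n \<Rightarrow> real^'m" and J :: "real^'n \<Rightarrow> real^'n^'m"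
    and r :: "real^'n \<Rightarrow> real"
    and \<kappa>v \<sigma>c \<epsilon>\<tau> \<xi> \<eta> \<sigma>u \<tau>init \<sigma>min :: real
    and x v u s :: "nat \<Rightarrow> real^'n" and \<alpha> \<tau> :: "nat \<Rightarrow> real"
    and X :: "(real^'n) set"
    and f_low G R C JB Lg LJ :: real
  assumes f_deriv: "\<And>z. (f has_derivative (\<lambda>h. g z \<bullet> h)) (at z)"
    and g_cont: "continuous_on UNIV g"
    and c_deriv: "\<And>z. (c has_derivative (\<lambda>h. J z *v h)) (at z)"
    and J_cont: "continuous_on UNIV J"
    and r_convex: "convex_on UNIV r"
    and r_nonneg: "\<And>z. r z \<ge> 0"
    and \<kappa>v_pos: "\<kappa>v > 0"
    and \<sigma>c: "0 < \<sigma>c" "\<sigma>c < 1"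
    and \<epsilon>\<tau>: "0 < \<epsilon>\<tau>" "\<epsilon>\<tau> < 1"
    and \<xi>: "0 < \<xi>" "\<xi> < 1"
    and \<eta>: "0 < \<eta>" "\<eta> < 1"
    and \<sigma>u: "0 < \<sigma>u" "\<sigma>u \<le> 1/2"
    and \<alpha>0: "\<alpha> 0 > 0"
    and \<tau>init: "\<tau>init > 0"
    and v_range: "\<And>k. \<exists>w. v k = transpose (J (x k)) *v w"
    and v_norm: "\<And>k. norm (v k) \<le> \<kappa>v * \<alpha> k * norm (transpose (J (x k)) *v c (x k))"
    and v_decrease: "\<And>k \<beta>. 0 \<le> \<beta> \<Longrightarrow> \<beta> \<le> \<kappa>v * \<alpha> k \<Longrightarrow>
        norm (c (x k) + J (x k) *v v k) \<le> norm (c (x k) - \<beta> *\<^sub>R (J (x k) *v (transpose (J (x k)) *v c (x k))))"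
    and stationary_feasible: "\<And>k. transpose (J (x k)) *v c (x k) = 0 \<Longrightarrow> c (x k) = 0"
    and tangential_step: "\<And>k. J (x k) *v u k = 0
      \<and> (\<forall>w. J (x k) *v w = 0 \<longrightarrow>
            g (x k) \<bullet> u k + norm (u k) ^ 2 / (2 * \<alpha> k) + r (x k + v k + u k)
          \<le> g (x k) \<bullet> w + norm w ^ 2 / (2 * \<alpha> k) + r (x k + v k + w))"
    and s_def: "\<And>k. s k = v k + u k"
    and tau_update: "\<And>k. (let \<tau>prev = (if k = 0 then \<tau>init else \<tau> (k - 1));
                        D = g (x k) \<bullet> s k + (\<sigma>u + 1/2) * norm (s k) ^ 2 / \<alpha> k
                            + r (x k + s k) - r (x k);
                        t = (1 - \<sigma>c) * (norm (c (x k)) - norm (c (x k) + J (x k) *v v k)) / D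
                    in \<tau> k = (if D \<le> 0 \<or> \<tau>prev \<le> t then \<tau>prev
                              else min ((1 - \<epsilon>\<tau>) * \<tau>prev) t))"
    and step_acceptance: "\<And>k. (if merit f r c (\<tau> k) (x k + s k)
                           \<le> merit f r c (\<tau> k) (x k) - \<eta> * dq r c (x k) (g (x k)) (J (x k)) (\<alpha> k) (s k) (\<tau> k)
                      then x (Suc k) = x k + s k \<and> \<alpha> (Suc k) = \<alpha> k
                      else x (Suc k) = x k \<and> \<alpha> (Suc k) = \<xi> * \<alpha> k)"
    and X_convex: "convex X"
    and X_iter: "\<And>k. x k \<in> X \<and> x k + s k \<in> X"
    and f_lower: "\<And>z. z \<in> X \<Longrightarrow> f_low \<le> f z"
    and g_bound: "\<And>z. z \<in> X \<Longrightarrow> norm (g z) \<le> G"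
    and subgrad_bound: "\<And>z gr. z \<in> X \<Longrightarrow> gr \<in> subdiff r z \<Longrightarrow> norm gr \<le> R"
    and c_bound: "\<And>z. z \<in> X \<Longrightarrow> norm (c z) \<le> C"
    and J_bound: "\<And>z. z \<in> X \<Longrightarrow> norm (J z) \<le> JB"
    and g_lipschitz: "Lg-lipschitz_on X g"
    and J_lipschitz: "LJ-lipschitz_on X J"
    and \<sigma>min_pos: "\<sigma>min > 0"
    and \<sigma>min_bd: "\<And>k. sigma_min_sv (J (x k)) \<ge> \<sigma>min"
begin

definition accepted :: "nat \<Rightarrow> bool" where
  "accepted k \<longleftrightarrow> merit f r c (\<tau> k) (x k + s k)
     \<le> merit f r c (\<tau> k) (x k) - \<eta> * dq r c (x k) (g (x k)) (J (x k)) (\<alpha> k) (s k) (\<tau> k)"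

lemma accepted_step: "accepted k \<Longrightarrow> x (Suc k) = x k + s k \<and> \<alpha> (Suc k) = \<alpha> k"
  and rejected_step: "\<not> accepted k \<Longrightarrow> x (Suc k) = x k \<and> \<alpha> (Suc k) = \<xi> * \<alpha> k"
  using step_acceptance[of k] by (simp_all add: accepted_def)

lemma alpha_pos: "\<alpha> k > 0"
proof (induction k)
  case (Suc k)
  then show ?case
    using accepted_step[of k] rejected_step[of k] \<xi> by (cases "accepted k") auto
qed (use \<alpha>0 in simp)

lemma alpha_Suc_le: "\<alpha> (Suc k) \<le> \<alpha> k"
  using accepted_step[of k] rejected_step[of k] \<xi> alpha_pos[of k] by (cases "accepted k") auto

lemma decseq_alpha: "decseq \<alpha>"
  using alpha_Suc_le by (rule decseq_SucI)

lemma alpha_le_alpha0: "\<alpha> k \<le> \<alpha> 0"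
  using decseqD[OF decseq_alpha, of 0 k] by simp

lemma x_in_X: "x k \<in> X" and x_plus_s_in_X: "x k + s k \<in> X"
  using X_iter[of k] by auto

lemma C_nonneg: "0 \<le> C" and JB_nonneg: "0 \<le> JB"
  using c_bound[OF x_in_X[of 0]] J_bound[OF x_in_X[of 0]] norm_ge_zero by (meson order_trans)+

lemma J_transpose_mult_le: "norm (transpose (J (x k)) *v y) \<le> JB * norm y"
  using matrix_vector_mult_norm_le[of "transpose (J (x k))" y] J_bound[OF x_in_X[of k]]
  by (metis norm_transpose mult_right_mono norm_ge_zero order_trans)

lemma sigma_min_le: "\<sigma>min * norm y \<le> norm (transpose (J (x k)) *v y)"
  using sigma_min_sv_le[of "J (x k)" y] \<sigma>min_bd[of k] by (meson mult_right_mono norm_ge_zero order_trans)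

lemma J_u: "J (x k) *v u k = 0"
  using tangential_step[of k] by simp

lemma inner_v_u: "v k \<bullet> u k = 0"
  using v_range[of k] J_u[of k] by (auto simp: inner_transpose_matrix_vector)

lemma norm_s_sq: "norm (s k) ^ 2 = norm (v k) ^ 2 + norm (u k) ^ 2"
  using inner_v_u[of k] unfolding s_def power2_norm_eq_inner
  by (simp add: inner_add_left inner_add_right inner_commute)

lemma subproblem_multiplier:
  "\<exists>y. \<exists>gr \<in> subdiff r (x k + s k). g (x k) + (1 / \<alpha> k) *\<^sub>R u k + gr = transpose (J (x k)) *v y"
  using prox_subproblem_multiplier[OF r_convex alpha_pos[of k] J_u[of k], where q = "g (x k)" and z = "x k + v k"] tangential_step[of k]
  by (simp add: s_def add.assoc)

definition D :: "nat \<Rightarrow> real" where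
  "D k = g (x k) \<bullet> s k + (\<sigma>u + 1/2) * norm (s k) ^ 2 / \<alpha> k + r (x k + s k) - r (x k)"

definition normal_decrease :: "nat \<Rightarrow> real" where
  "normal_decrease k = norm (c (x k)) - norm (c (x k) + J (x k) *v v k)"

text \<open>The optimality condition of the tangential subproblem turns the \<open>u k\<close>-part of \<open>D k\<close>
  into \<open>-norm (u k)^2 / \<alpha> k\<close>, so only the normal step remains.\<close>
lemma D_le: "D k \<le> (G + R) * norm (v k) + norm (v k) ^ 2 / \<alpha> k"
  and G_plus_R_nonneg: "0 \<le> G + R"
proof -
  obtain y gr where gr: "gr \<in> subdiff r (x k + s k)"
    and eq: "g (x k) + (1 / \<alpha> k) *\<^sub>R u k + gr = transpose (J (x k)) *v y"
    using subproblem_multiplier[of k] by blast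
  have "norm (g (x k) + gr) \<le> G + R"
    using g_bound[OF x_in_X[of k]] subgrad_bound[OF x_plus_s_in_X gr] norm_triangle_ineq[of "g (x k)" gr]
    by linarith
  then show "0 \<le> G + R"
    using norm_ge_zero order_trans by blast
  have "r (x k + s k) + gr \<bullet> (x k - (x k + s k)) \<le> r (x k)"
    using gr unfolding subdiff_def by blast
  then have "r (x k + s k) - r (x k) \<le> gr \<bullet> s k"
    by simp
  moreover have "(g (x k) + gr) \<bullet> u k = - (norm (u k) ^ 2 / \<alpha> k)"
  proof -
    have "g (x k) + gr = transpose (J (x k)) *v y - (1 / \<alpha> k) *\<^sub>R u k"
      unfolding eq[symmetric] by simp
    then show ?thesis
      by (simp add: inner_diff_left inner_transpose_matrix_vector J_u power2_norm_eq_inner)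
  qed
  moreover have "(g (x k) + gr) \<bullet> v k \<le> (G + R) * norm (v k)"
    using norm_cauchy_schwarz[of "g (x k) + gr" "v k"]
      mult_right_mono[OF \<open>norm (g (x k) + gr) \<le> G + R\<close> norm_ge_zero[of "v k"]]
    by linarith
  moreover have "(\<sigma>u + 1/2) * norm (s k) ^ 2 / \<alpha> k \<le> norm (v k) ^ 2 / \<alpha> k + norm (u k) ^ 2 / \<alpha> k"
  proof -
    have "(\<sigma>u + 1/2) * norm (s k) ^ 2 \<le> norm (s k) ^ 2"
      using \<sigma>u by (simp add: mult_left_le_one_le)
    then show ?thesis
      using alpha_pos[of k] by (simp add: norm_s_sq divide_right_mono add_divide_distrib[symmetric])
  qed
  ultimately show "D k \<le> (G + R) * norm (v k) + norm (v k) ^ 2 / \<alpha> k"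
    unfolding D_def s_def by (simp add: inner_add_left inner_add_right)
qed

definition D_factor :: real where
  "D_factor = \<kappa>v * (G + R + \<kappa>v * JB * C) + 1"

lemma D_factor_pos: "0 < D_factor"
proof -
  have "0 \<le> \<kappa>v * (G + R + \<kappa>v * JB * C)"
    using \<kappa>v_pos G_plus_R_nonneg JB_nonneg C_nonneg by simp
  then show ?thesis
    by (simp add: D_factor_def)
qed

lemma D_le_D_factor: "D k \<le> \<alpha> k * norm (transpose (J (x k)) *v c (x k)) * D_factor"
proof -
  define nw where "nw = norm (transpose (J (x k)) *v c (x k))"
  have v: "norm (v k) \<le> \<kappa>v * \<alpha> k * nw"
    using v_norm[of k] by (simp add: nw_def)
  have "nw \<le> JB * C"
    unfolding nw_def using J_transpose_mult_le c_bound[OF x_in_X[of k]] JB_nonneg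
    by (meson mult_left_mono order_trans)
  have "(G + R) * norm (v k) \<le> (G + R) * (\<kappa>v * \<alpha> k * nw)"
    using v G_plus_R_nonneg by (rule mult_left_mono)
  moreover have "norm (v k) ^ 2 / \<alpha> k \<le> (\<kappa>v * \<alpha> k * nw) ^ 2 / \<alpha> k"
    using v alpha_pos[of k] by (intro divide_right_mono power_mono) simp_all
  ultimately have "D k \<le> (G + R) * (\<kappa>v * \<alpha> k * nw) + (\<kappa>v * \<alpha> k * nw) ^ 2 / \<alpha> k"
    using D_le[of k] by linarith
  also have "\<dots> = \<alpha> k * nw * (\<kappa>v * (G + R + \<kappa>v * nw))"
    using alpha_pos[of k] by (simp add: power2_eq_square field_simps)
  also have "\<dots> \<le> \<alpha> k * nw * D_factor"
  proof (rule mult_left_mono)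
    have "\<kappa>v * (\<kappa>v * nw) \<le> \<kappa>v * (\<kappa>v * JB * C)"
      using \<open>nw \<le> JB * C\<close> \<kappa>v_pos by (simp add: mult_left_mono mult.assoc)
    then show "\<kappa>v * (G + R + \<kappa>v * nw) \<le> D_factor"
      unfolding D_factor_def distrib_left by linarith
    show "0 \<le> \<alpha> k * nw"
      using alpha_pos[of k] by (simp add: nw_def)
  qed
  finally show ?thesis
    by (simp add: nw_def)
qed

lemma normal_decrease_nonneg: "0 \<le> normal_decrease k"
  using v_decrease[of 0 k] \<kappa>v_pos alpha_pos[of k] by (simp add: normal_decrease_def)

definition \<rho> :: real where
  "\<rho> = min \<kappa>v (1 / (\<alpha> 0 * (1 + JB\<^sup>2)))"

lemma \<rho>_pos: "0 < \<rho>"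
  using \<kappa>v_pos \<alpha>0 by (simp add: \<rho>_def add_pos_nonneg)

lemma cauchy_step_size_le: "\<rho> * \<alpha> k * norm (J (x k)) ^ 2 \<le> 1"
proof -
  have pos: "0 < \<alpha> 0 * (1 + JB\<^sup>2)"
    using \<alpha>0 by (simp add: add_pos_nonneg)
  have "\<rho> * \<alpha> k \<le> \<alpha> k / (\<alpha> 0 * (1 + JB\<^sup>2))"
    using alpha_pos[of k] mult_right_mono[OF min.cobounded2, of "\<alpha> k" \<kappa>v "1 / (\<alpha> 0 * (1 + JB\<^sup>2))"]
    by (simp add: \<rho>_def)
  moreover have "norm (J (x k)) ^ 2 \<le> JB\<^sup>2"
    using J_bound[OF x_in_X[of k]] by (simp add: power_mono)
  ultimately have "\<rho> * \<alpha> k * norm (J (x k)) ^ 2 \<le> \<alpha> k / (\<alpha> 0 * (1 + JB\<^sup>2)) * JB\<^sup>2"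
    using \<rho>_pos alpha_pos[of k] pos by (intro mult_mono) simp_all
  also have "\<dots> \<le> 1"
  proof -
    have "\<alpha> k * JB\<^sup>2 \<le> \<alpha> 0 * (1 + JB\<^sup>2)"
      using mult_right_mono[OF alpha_le_alpha0[of k], of "JB\<^sup>2"] \<alpha>0 by (simp add: algebra_simps)
    then show ?thesis
      using pos by (simp add: divide_le_eq)
  qed
  finally show ?thesis .
qed

text \<open>The normal step does at least as well as the Cauchy step with step size \<open>\<rho> * \<alpha> k\<close>.\<close>
lemma normal_decrease_ge:
  "\<rho> * \<alpha> k * \<sigma>min * norm (transpose (J (x k)) *v c (x k)) / 2 \<le> normal_decrease k"
proof -
  define \<beta> where "\<beta> = \<rho> * \<alpha> k"
  let ?w = "transpose (J (x k)) *v c (x k)"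
  have \<beta>: "0 \<le> \<beta>" "\<beta> \<le> \<kappa>v * \<alpha> k"
    using \<rho>_pos alpha_pos[of k] by (simp_all add: \<beta>_def \<rho>_def)
  have "norm (c (x k) - \<beta> *\<^sub>R (J (x k) *v ?w)) ^ 2 \<le> norm (c (x k)) ^ 2 - \<beta> * norm ?w ^ 2"
    using \<beta>(1) cauchy_step_size_le[of k] unfolding \<beta>_def by (rule norm_cauchy_step_le)
  with power_mono[OF v_decrease[OF \<beta>] norm_ge_zero]
  have "norm (c (x k) + J (x k) *v v k) ^ 2 \<le> norm (c (x k)) ^ 2 - \<beta> * norm ?w ^ 2"
    by (rule order_trans)
  then have "\<beta> * \<sigma>min * norm ?w \<le> 2 * normal_decrease k" if "c (x k) \<noteq> 0"
    using normal_decrease_nonneg[of k] sigma_min_le[of "c (x k)" k] \<beta>(1) that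
    unfolding normal_decrease_def by (intro decrease_ge_if_sq_decrease_ge) simp_all
  then show ?thesis
    using normal_decrease_nonneg[of k] by (cases "c (x k) = 0") (simp_all add: \<beta>_def)
qed

subsection \<open>The merit parameter\<close>

definition \<tau>prev :: "nat \<Rightarrow> real" where
  "\<tau>prev k = (if k = 0 then \<tau>init else \<tau> (k - 1))"

definition trial :: "nat \<Rightarrow> real" where
  "trial k = (1 - \<sigma>c) * normal_decrease k / D k"

lemma tau_eq:
  "\<tau> k = (if D k \<le> 0 \<or> \<tau>prev k \<le> trial k then \<tau>prev k else min ((1 - \<epsilon>\<tau>) * \<tau>prev k) (trial k))"
  using tau_update[of k] by (simp add: Let_def D_def normal_decrease_def \<tau>prev_def trial_def)

lemma tau_le_prev: "0 \<le> \<tau>prev k \<Longrightarrow> \<tau> k \<le> \<tau>prev k"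
  using tau_eq[of k] \<epsilon>\<tau> by (auto simp: min_def mult_le_cancel_right1)

lemma tau_ge:
  assumes "0 \<le> T" and "0 < D k \<Longrightarrow> T \<le> trial k"
  shows "min (\<tau>prev k) ((1 - \<epsilon>\<tau>) * T) \<le> \<tau> k"
proof (cases "D k \<le> 0 \<or> \<tau>prev k \<le> trial k")
  case False
  then have "(1 - \<epsilon>\<tau>) * T \<le> (1 - \<epsilon>\<tau>) * \<tau>prev k" "(1 - \<epsilon>\<tau>) * T \<le> trial k"
    using assms \<epsilon>\<tau> by (auto intro: mult_left_mono order_trans[OF mult_left_le_one_le])
  then show ?thesis
    using tau_eq[of k] False by simp
qed (use tau_eq[of k] in simp)

definition trial_lb :: real where
  "trial_lb = (1 - \<sigma>c) * \<rho> * \<sigma>min / (2 * D_factor)"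

lemma trial_lb_pos: "0 < trial_lb"
  using \<sigma>c \<rho>_pos \<sigma>min_pos D_factor_pos by (simp add: trial_lb_def)

lemma trial_ge:
  assumes "0 < D k"
  shows "trial_lb \<le> trial k"
proof -
  define nw where "nw = norm (transpose (J (x k)) *v c (x k))"
  have "trial_lb * D k \<le> trial_lb * (\<alpha> k * nw * D_factor)"
    using D_le_D_factor[of k] trial_lb_pos by (simp add: nw_def mult_left_mono)
  also have "\<dots> = (1 - \<sigma>c) * (\<rho> * \<alpha> k * \<sigma>min * nw / 2)"
    using D_factor_pos by (simp add: trial_lb_def)
  also have "\<dots> \<le> (1 - \<sigma>c) * normal_decrease k"
    using normal_decrease_ge[of k] \<sigma>c by (simp add: nw_def)
  finally show ?thesis
    using assms by (simp add: trial_def le_divide_eq)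
qed

definition \<tau>min :: real where
  "\<tau>min = min \<tau>init ((1 - \<epsilon>\<tau>) * trial_lb)"

lemma \<tau>min_pos: "0 < \<tau>min"
  using \<tau>init \<epsilon>\<tau> trial_lb_pos by (simp add: \<tau>min_def)

lemma tau_bounds: "\<tau>min \<le> \<tau> k \<and> \<tau> k \<le> \<tau>init"
proof (induction k)
  case 0
  then show ?case
    using tau_le_prev[of 0] tau_ge[of trial_lb 0] trial_ge trial_lb_pos \<tau>init
    by (simp add: \<tau>prev_def \<tau>min_def)
next
  case (Suc k)
  then have "0 \<le> \<tau>prev (Suc k)"
    using \<tau>min_pos by (simp add: \<tau>prev_def)
  then show ?case
    using Suc tau_le_prev[of "Suc k"] tau_ge[of trial_lb "Suc k"] trial_ge trial_lb_pos
    by (fastforce simp: \<tau>prev_def \<tau>min_def)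
qed

lemma tau_pos: "0 < \<tau> k"
  using tau_bounds[of k] \<tau>min_pos by simp

lemma tau_Suc_le: "\<tau> (Suc k) \<le> \<tau> k"
  using tau_le_prev[of "Suc k"] tau_pos[of k] by (simp add: \<tau>prev_def)

lemma tau_D_le: "\<tau> k * D k \<le> (1 - \<sigma>c) * normal_decrease k"
proof (cases "D k \<le> 0")
  case True
  then have "\<tau> k * D k \<le> 0"
    using tau_pos[of k] by (simp add: mult_nonneg_nonpos)
  also have "0 \<le> (1 - \<sigma>c) * normal_decrease k"
    using normal_decrease_nonneg[of k] \<sigma>c by simp
  finally show ?thesis .
next
  case False
  then have "\<tau> k \<le> trial k"
    using tau_eq[of k] by (auto simp: min_def)
  with False show ?thesis
    by (simp add: trial_def le_divide_eq)
qed

subsection \<open>Acceptance and the step size\<close>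

definition model_decrease :: "nat \<Rightarrow> real" where
  "model_decrease k = dq r c (x k) (g (x k)) (J (x k)) (\<alpha> k) (s k) (\<tau> k)"

lemma model_decrease_eq:
  "model_decrease k = - \<tau> k * D k + \<tau> k * \<sigma>u * norm (s k) ^ 2 / \<alpha> k + normal_decrease k"
proof -
  have "J (x k) *v s k = J (x k) *v v k"
    using J_u[of k] by (simp add: s_def matrix_vector_right_distrib)
  then show ?thesis
    using alpha_pos[of k]
    by (simp add: model_decrease_def dq_def D_def normal_decrease_def field_simps)
qed

lemma model_decrease_ge:
  "\<tau> k * \<sigma>u * norm (s k) ^ 2 / \<alpha> k + \<sigma>c * normal_decrease k \<le> model_decrease k"
  using model_decrease_eq[of k] tau_D_le[of k] tau_pos[of k] by (simp add: algebra_simps)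

lemma model_decrease_ge_step: "\<tau> k * \<sigma>u * norm (s k) ^ 2 / \<alpha> k \<le> model_decrease k"
  and model_decrease_ge_normal: "\<sigma>c * normal_decrease k \<le> model_decrease k"
proof -
  have "0 \<le> \<tau> k * \<sigma>u * norm (s k) ^ 2 / \<alpha> k" "0 \<le> \<sigma>c * normal_decrease k"
    using tau_pos[of k] \<sigma>u alpha_pos[of k] \<sigma>c normal_decrease_nonneg[of k] by simp_all
  then show "\<tau> k * \<sigma>u * norm (s k) ^ 2 / \<alpha> k \<le> model_decrease k" "\<sigma>c * normal_decrease k \<le> model_decrease k"
    using model_decrease_ge[of k] by linarith+
qed

lemma model_decrease_nonneg: "0 \<le> model_decrease k"
proof -
  have "0 \<le> \<sigma>c * normal_decrease k"
    using normal_decrease_nonneg[of k] \<sigma>c by simp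
  then show ?thesis
    using model_decrease_ge_normal[of k] by linarith
qed

lemma f_upper: "f (x k + s k) \<le> f (x k) + g (x k) \<bullet> s k + Lg * norm (s k) ^ 2"
proof -
  have "onorm (\<lambda>h. g z \<bullet> h - g (x k) \<bullet> h) \<le> Lg * norm (z - x k)" if "z \<in> X" for z
  proof (rule onorm_le)
    fix h
    have "norm (g z \<bullet> h - g (x k) \<bullet> h) \<le> norm (g z - g (x k)) * norm h"
      using Cauchy_Schwarz_ineq2[of "g z - g (x k)" h] by (simp add: inner_diff_left)
    also have "\<dots> \<le> Lg * norm (z - x k) * norm h"
      using lipschitz_on_normD[OF g_lipschitz that x_in_X] by (simp add: mult_right_mono)
    finally show "norm (g z \<bullet> h - g (x k) \<bullet> h) \<le> Lg * norm (z - x k) * norm h" .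
  qed
  from linearization_error_le[OF X_convex x_in_X[of k] x_plus_s_in_X[of k]
      lipschitz_on_nonneg[OF g_lipschitz] f_deriv this]
  show ?thesis
    by (simp add: abs_le_iff)
qed

lemma c_upper: "norm (c (x k + s k)) \<le> norm (c (x k) + J (x k) *v s k) + LJ * norm (s k) ^ 2"
proof -
  have "onorm (\<lambda>h. J z *v h - J (x k) *v h) \<le> LJ * norm (z - x k)" if "z \<in> X" for z
  proof (rule onorm_le)
    fix h
    have "norm (J z *v h - J (x k) *v h) \<le> norm (J z - J (x k)) * norm h"
      using matrix_vector_mult_norm_le[of "J z - J (x k)" h] by (simp add: matrix_vector_mult_diff_rdistrib)
    also have "\<dots> \<le> LJ * norm (z - x k) * norm h"
      using lipschitz_on_normD[OF J_lipschitz that x_in_X] by (simp add: mult_right_mono)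
    finally show "norm (J z *v h - J (x k) *v h) \<le> LJ * norm (z - x k) * norm h" .
  qed
  from linearization_error_le[OF X_convex x_in_X[of k] x_plus_s_in_X[of k]
      lipschitz_on_nonneg[OF J_lipschitz] c_deriv this]
  have "norm (c (x k + s k) - c (x k) - J (x k) *v s k) \<le> LJ * norm (s k) ^ 2"
    by simp
  then show ?thesis
    using norm_triangle_ineq[of "c (x k) + J (x k) *v s k" "c (x k + s k) - c (x k) - J (x k) *v s k"]
    by (simp add: algebra_simps)
qed

text \<open>Once \<open>\<alpha> k (\<tau> k Lg + LJ) \<le> \<tau> k / 2\<close>, the proximal term of the model dominates the
  linearization errors of \<open>f\<close> and \<open>c\<close>.\<close>
lemma accepted_if_alpha_small:
  assumes "\<alpha> k * (\<tau> k * Lg + LJ) \<le> \<tau> k / 2"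
  shows "accepted k"
proof -
  have "(\<tau> k * Lg + LJ) * (2 * \<alpha> k) \<le> \<tau> k"
    using assms by (simp add: mult_ac)
  then have "\<tau> k * Lg + LJ \<le> \<tau> k / (2 * \<alpha> k)"
    using alpha_pos[of k] by (simp add: pos_le_divide_eq)
  then have "(\<tau> k * Lg + LJ) * norm (s k) ^ 2 \<le> \<tau> k / (2 * \<alpha> k) * norm (s k) ^ 2"
    by (rule mult_right_mono) simp
  then have proximal: "\<tau> k * Lg * norm (s k) ^ 2 + LJ * norm (s k) ^ 2 \<le> \<tau> k * (norm (s k) ^ 2 / (2 * \<alpha> k))"
    by (simp add: algebra_simps)
  have f: "\<tau> k * f (x k + s k) \<le> \<tau> k * f (x k) + \<tau> k * (g (x k) \<bullet> s k) + \<tau> k * Lg * norm (s k) ^ 2"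
    using mult_left_mono[OF f_upper[of k], of "\<tau> k"] tau_pos[of k] by (simp add: algebra_simps)
  have dq: "model_decrease k = - (\<tau> k * (g (x k) \<bullet> s k)) - \<tau> k * (norm (s k) ^ 2 / (2 * \<alpha> k))
      - \<tau> k * r (x k + s k) + \<tau> k * r (x k) + norm (c (x k)) - norm (c (x k) + J (x k) *v s k)"
    by (simp add: model_decrease_def dq_def algebra_simps)
  have "\<eta> * model_decrease k \<le> model_decrease k"
    using \<eta> model_decrease_nonneg[of k] by (simp add: mult_left_le_one_le)
  then show ?thesis
    using proximal f dq c_upper[of k]
    unfolding accepted_def model_decrease_def[symmetric] merit_def distrib_left by linarith
qed

lemma Lg_LJ_nonneg: "0 \<le> Lg" "0 \<le> LJ"
  using g_lipschitz J_lipschitz by (simp_all add: lipschitz_on_nonneg)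

definition \<alpha>thr :: real where
  "\<alpha>thr = \<tau>min / (2 * (\<tau>init * Lg + LJ + 1))"

lemma lipschitz_weight_pos: "0 < \<tau>init * Lg + LJ + 1"
  using Lg_LJ_nonneg \<tau>init by (intro add_nonneg_pos add_nonneg_nonneg mult_nonneg_nonneg) simp_all

lemma \<alpha>thr_pos: "0 < \<alpha>thr"
  using lipschitz_weight_pos \<tau>min_pos by (simp add: \<alpha>thr_def)

lemma accepted_if_alpha_le_thr:
  assumes "\<alpha> k \<le> \<alpha>thr"
  shows "accepted k"
proof (rule accepted_if_alpha_small)
  define W where "W = \<tau>init * Lg + LJ + 1"
  have "0 < W" "\<alpha>thr = \<tau>min / (2 * W)"
    using lipschitz_weight_pos by (simp_all add: \<alpha>thr_def W_def)
  have "\<tau> k * Lg \<le> \<tau>init * Lg"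
    using tau_bounds[of k] Lg_LJ_nonneg by (simp add: mult_right_mono)
  then have "\<tau> k * Lg + LJ \<le> W"
    by (simp add: W_def)
  moreover have "0 \<le> \<tau> k * Lg + LJ"
    using tau_pos[of k] Lg_LJ_nonneg by simp
  ultimately have "\<alpha> k * (\<tau> k * Lg + LJ) \<le> \<alpha>thr * W"
    using assms \<alpha>thr_pos by (intro mult_mono) simp_all
  also have "\<dots> = \<tau>min / 2"
    using \<open>0 < W\<close> \<open>\<alpha>thr = \<tau>min / (2 * W)\<close> by simp
  also have "\<dots> \<le> \<tau> k / 2"
    using tau_bounds[of k] by simp
  finally show "\<alpha> k * (\<tau> k * Lg + LJ) \<le> \<tau> k / 2" .
qed

definition \<alpha>min :: real where
  "\<alpha>min = min (\<alpha> 0) (\<xi> * \<alpha>thr)"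

lemma \<alpha>min_pos: "0 < \<alpha>min"
  using \<alpha>0 \<xi> \<alpha>thr_pos by (simp add: \<alpha>min_def)

lemma alpha_ge: "\<alpha>min \<le> \<alpha> k"
proof (induction k)
  case (Suc k)
  show ?case
  proof (cases "\<alpha> k \<le> \<alpha>thr")
    case True
    then show ?thesis
      using accepted_step[OF accepted_if_alpha_le_thr] Suc by simp
  next
    case False
    have "\<alpha>min \<le> \<xi> * \<alpha>thr"
      by (simp add: \<alpha>min_def)
    also have "\<dots> \<le> \<xi> * \<alpha> k"
      using False \<xi> by (intro mult_left_mono) simp_all
    also have "\<dots> \<le> \<alpha> (Suc k)"
      using accepted_step[of k] rejected_step[of k] \<xi> alpha_pos[of k]
      by (cases "accepted k") (auto simp: mult_left_le_one_le)
    finally show ?thesis .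
  qed
qed (simp add: \<alpha>min_def)

lemma eventually_accepted: "\<forall>\<^sub>F k in sequentially. accepted k"
proof -
  obtain L where L: "\<alpha> \<longlonglongrightarrow> L"
    using decseq_convergent[OF decseq_alpha] alpha_ge by blast
  then have "\<alpha>min \<le> L"
    using alpha_ge by (intro LIMSEQ_le_const) auto
  have "(\<lambda>k. \<alpha> (Suc k) - \<xi> * \<alpha> k) \<longlonglongrightarrow> L - \<xi> * L"
    by (intro tendsto_intros L LIMSEQ_Suc)
  moreover have "0 < L - \<xi> * L"
    using \<open>\<alpha>min \<le> L\<close> \<alpha>min_pos \<xi> by (simp add: algebra_simps)
  ultimately have "\<forall>\<^sub>F k in sequentially. 0 < \<alpha> (Suc k) - \<xi> * \<alpha> k"
    by (rule order_tendstoD)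
  then show ?thesis
    by (rule eventually_mono) (use rejected_step in force)
qed

subsection \<open>Convergence\<close>

text \<open>The merit function shifted by \<open>f_low\<close> is nonnegative and nonincreasing in \<open>\<tau>\<close>.\<close>
definition potential :: "nat \<Rightarrow> real" where
  "potential k = \<tau> k * (f (x k) + r (x k) - f_low) + norm (c (x k))"

lemma potential_nonneg: "0 \<le> potential k"
  using tau_pos[of k] f_lower[OF x_in_X[of k]] r_nonneg[of "x k"] by (simp add: potential_def)

lemma potential_Suc_le_accepted:
  assumes "accepted k"
  shows "potential (Suc k) \<le> potential k - \<eta> * model_decrease k"
proof -
  have "potential (Suc k) \<le> \<tau> k * (f (x (Suc k)) + r (x (Suc k)) - f_low) + norm (c (x (Suc k)))"
    using tau_Suc_le[of k] f_lower[OF x_in_X[of "Suc k"]] r_nonneg[of "x (Suc k)"]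
    by (simp add: potential_def mult_right_mono)
  also have "\<dots> = merit f r c (\<tau> k) (x k + s k) - \<tau> k * f_low"
    using accepted_step[OF assms] by (simp add: merit_def algebra_simps)
  also have "\<dots> \<le> potential k - \<eta> * model_decrease k"
    using assms by (simp add: accepted_def model_decrease_def merit_def potential_def algebra_simps)
  finally show ?thesis .
qed

lemma potential_Suc_le: "potential (Suc k) \<le> potential k"
proof (cases "accepted k")
  case True
  have "0 \<le> \<eta> * model_decrease k"
    using \<eta>(1) model_decrease_nonneg[of k] by simp
  then show ?thesis
    using potential_Suc_le_accepted[OF True] by linarith
next
  case False
  then show ?thesis
    using rejected_step[of k] tau_Suc_le[of k] f_lower[OF x_in_X[of k]] r_nonneg[of "x k"]
    by (simp add: potential_def mult_right_mono)
qed

lemma model_decrease_tendsto_0: "model_decrease \<longlonglongrightarrow> 0"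
proof (rule Lim_null_comparison)
  have "decseq potential"
    using potential_Suc_le by (rule decseq_SucI)
  then obtain L where L: "potential \<longlonglongrightarrow> L"
    using decseq_convergent potential_nonneg by blast
  have "(\<lambda>k. potential k - potential (Suc k)) \<longlonglongrightarrow> L - L"
    using L LIMSEQ_Suc[OF L] by (rule tendsto_diff)
  then show "(\<lambda>k. (potential k - potential (Suc k)) / \<eta>) \<longlonglongrightarrow> 0"
    by (intro tendsto_divide_zero) simp
  show "\<forall>\<^sub>F k in sequentially. norm (model_decrease k) \<le> (potential k - potential (Suc k)) / \<eta>"
    using eventually_accepted
  proof (rule eventually_mono)
    fix k
    assume "accepted k"
    then have "\<eta> * model_decrease k \<le> potential k - potential (Suc k)"
      using potential_Suc_le_accepted[of k] by simp
    then show "norm (model_decrease k) \<le> (potential k - potential (Suc k)) / \<eta>"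
      using model_decrease_nonneg[of k] \<eta> by (simp add: le_divide_eq mult.commute)
  qed
qed

lemma s_tendsto_0: "s \<longlonglongrightarrow> 0"
proof (rule Lim_null_comparison)
  define K where "K = \<alpha> 0 / (\<tau>min * \<sigma>u)"
  show "\<forall>\<^sub>F k in sequentially. norm (s k) \<le> sqrt (K * model_decrease k)"
  proof (intro always_eventually allI)
    fix k
    have "\<tau>min * \<sigma>u * norm (s k) ^ 2 / \<alpha> 0 \<le> \<tau> k * \<sigma>u * norm (s k) ^ 2 / \<alpha> k"
      using tau_bounds[of k] \<sigma>u alpha_pos[of k] alpha_le_alpha0[of k] \<tau>min_pos
      by (intro frac_le mult_right_mono) auto
    also have "\<dots> \<le> model_decrease k"
      by (rule model_decrease_ge_step)
    finally have "norm (s k) ^ 2 \<le> K * model_decrease k"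
      using \<alpha>0 \<tau>min_pos \<sigma>u by (simp add: K_def field_simps)
    then show "norm (s k) \<le> sqrt (K * model_decrease k)"
      by (simp add: real_le_rsqrt)
  qed
  show "(\<lambda>k. sqrt (K * model_decrease k)) \<longlonglongrightarrow> 0"
    using tendsto_real_sqrt[OF tendsto_mult_right_zero[OF model_decrease_tendsto_0, of K]] by simp
qed

lemma u_tendsto_0: "u \<longlonglongrightarrow> 0"
proof (rule Lim_null_comparison)
  show "\<forall>\<^sub>F k in sequentially. norm (u k) \<le> norm (s k)"
    using norm_s_sq by (intro always_eventually allI power2_le_imp_le[OF _ norm_ge_zero]) simp
  show "(\<lambda>k. norm (s k)) \<longlonglongrightarrow> 0"
    using s_tendsto_0 by (simp add: tendsto_norm_zero_iff)
qed

lemma c_tendsto_0: "(\<lambda>k. c (x k)) \<longlonglongrightarrow> 0"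
proof (rule Lim_null_comparison)
  define K where "K = 2 / (\<sigma>c * \<rho> * \<alpha>min * \<sigma>min\<^sup>2)"
  show "\<forall>\<^sub>F k in sequentially. norm (c (x k)) \<le> K * model_decrease k"
  proof (intro always_eventually allI)
    fix k
    have "\<rho> * \<alpha>min * \<sigma>min * (\<sigma>min * norm (c (x k))) \<le> \<rho> * \<alpha> k * \<sigma>min * norm (transpose (J (x k)) *v c (x k))"
      using \<rho>_pos alpha_ge[of k] \<sigma>min_pos \<alpha>min_pos sigma_min_le[of "c (x k)" k]
      by (intro mult_mono) auto
    also have "\<dots> \<le> 2 * normal_decrease k"
      using normal_decrease_ge[of k] by simp
    also have "\<dots> \<le> 2 * (model_decrease k / \<sigma>c)"
      using model_decrease_ge_normal[of k] \<sigma>c by (simp add: le_divide_eq mult.commute)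
    finally show "norm (c (x k)) \<le> K * model_decrease k"
      using \<rho>_pos \<alpha>min_pos \<sigma>min_pos \<sigma>c by (simp add: K_def field_simps power2_eq_square)
  qed
  show "(\<lambda>k. K * model_decrease k) \<longlonglongrightarrow> 0"
    using tendsto_mult_right_zero[OF model_decrease_tendsto_0] by simp
qed

lemma scaled_u_tendsto_0: "(\<lambda>k. (1 / \<alpha> k) *\<^sub>R u k) \<longlonglongrightarrow> 0"
proof (rule Lim_null_comparison)
  show "\<forall>\<^sub>F k in sequentially. norm ((1 / \<alpha> k) *\<^sub>R u k) \<le> norm (u k) / \<alpha>min"
  proof (intro always_eventually allI)
    fix k
    have "norm ((1 / \<alpha> k) *\<^sub>R u k) = norm (u k) / \<alpha> k"
      using alpha_pos[of k] by simp
    also have "\<dots> \<le> norm (u k) / \<alpha>min"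
      using alpha_ge[of k] alpha_pos[of k] \<alpha>min_pos by (intro divide_left_mono) simp_all
    finally show "norm ((1 / \<alpha> k) *\<^sub>R u k) \<le> norm (u k) / \<alpha>min" .
  qed
  show "(\<lambda>k. norm (u k) / \<alpha>min) \<longlonglongrightarrow> 0"
    using u_tendsto_0 by (intro tendsto_divide_zero) (simp add: tendsto_norm_zero_iff)
qed

lemma multipliers_bounded:
  assumes gr: "\<And>k. gr k \<in> subdiff r (x k + s k)"
    and y: "\<And>k. g (x k) + (1 / \<alpha> k) *\<^sub>R u k + gr k = transpose (J (x k)) *v y k"
  shows "bounded (range (\<lambda>k. (gr k, y k)))"
proof -
  obtain U where U: "\<And>k. norm ((1 / \<alpha> k) *\<^sub>R u k) \<le> U"
    using convergent_imp_Bseq[OF convergentI[OF scaled_u_tendsto_0]] by (auto simp: Bseq_def)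
  have "norm (y k) \<le> (G + U + R) / \<sigma>min" for k
  proof -
    have "norm (transpose (J (x k)) *v y k) \<le> G + U + R"
      unfolding y[of k, symmetric]
      using g_bound[OF x_in_X[of k]] subgrad_bound[OF x_plus_s_in_X[of k] gr[of k]] U[of k]
        norm_triangle_ineq[of "g (x k) + (1 / \<alpha> k) *\<^sub>R u k" "gr k"]
        norm_triangle_ineq[of "g (x k)" "(1 / \<alpha> k) *\<^sub>R u k"]
      by linarith
    then have "\<sigma>min * norm (y k) \<le> G + U + R"
      using sigma_min_le[of "y k" k] by linarith
    then show ?thesis
      using \<sigma>min_pos by (simp add: field_simps)
  qed
  then have "range (\<lambda>k. (gr k, y k)) \<subseteq> cball 0 R \<times> cball 0 ((G + U + R) / \<sigma>min)"
    using subgrad_bound[OF x_plus_s_in_X gr] by auto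
  then show ?thesis
    by (rule bounded_subset[OF bounded_Times[OF bounded_cball bounded_cball]])
qed

lemma limit_point_feasible:
  assumes "strict_mono h" and "(x \<circ> h) \<longlonglongrightarrow> xstar"
  shows "c xstar = 0"
proof -
  have "(\<lambda>k. x (h k)) \<longlonglongrightarrow> xstar"
    using assms(2) by (simp add: comp_def)
  then have "(\<lambda>k. c (x (h k))) \<longlonglongrightarrow> c xstar"
    by (rule isCont_tendsto_compose[OF has_derivative_continuous[OF c_deriv]])
  moreover have "(\<lambda>k. c (x (h k))) \<longlonglongrightarrow> 0"
    using LIMSEQ_subseq_LIMSEQ[OF c_tendsto_0 assms(1)] by (simp add: comp_def)
  ultimately show ?thesis
    by (rule LIMSEQ_unique)
qed

lemma limit_point_stationary:
  assumes "strict_mono h" and "(x \<circ> h) \<longlonglongrightarrow> xstar"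
  shows "\<exists>ystar. \<exists>grstar \<in> subdiff r xstar. g xstar + grstar - transpose (J xstar) *v ystar = 0"
proof -
  obtain gr y where gr: "\<And>k. gr k \<in> subdiff r (x k + s k)"
    and y: "\<And>k. g (x k) + (1 / \<alpha> k) *\<^sub>R u k + gr k = transpose (J (x k)) *v y k"
    using subproblem_multiplier by metis
  have "bounded (range ((\<lambda>k. (gr k, y k)) \<circ> h))"
    by (rule bounded_subset[OF multipliers_bounded[OF gr y]]) auto
  then obtain l \<phi> where "strict_mono \<phi>" and l: "((\<lambda>k. (gr k, y k)) \<circ> h \<circ> \<phi>) \<longlonglongrightarrow> l"
    using bounded_imp_convergent_subsequence by blast
  define H where "H = h \<circ> \<phi>"
  have H: "strict_mono H"
    unfolding H_def using assms(1) \<open>strict_mono \<phi>\<close> by (rule strict_mono_o)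
  have xH: "(\<lambda>j. x (H j)) \<longlonglongrightarrow> xstar"
    using LIMSEQ_subseq_LIMSEQ[OF assms(2) \<open>strict_mono \<phi>\<close>] by (simp add: H_def comp_def)
  have grH: "(\<lambda>j. gr (H j)) \<longlonglongrightarrow> fst l" and yH: "(\<lambda>j. y (H j)) \<longlonglongrightarrow> snd l"
    using tendsto_fst[OF l] tendsto_snd[OF l] by (simp_all add: H_def comp_def)
  have sH: "(\<lambda>j. s (H j)) \<longlonglongrightarrow> 0" and uH: "(\<lambda>j. (1 / \<alpha> (H j)) *\<^sub>R u (H j)) \<longlonglongrightarrow> 0"
    using LIMSEQ_subseq_LIMSEQ[OF s_tendsto_0 H] LIMSEQ_subseq_LIMSEQ[OF scaled_u_tendsto_0 H]
    by (simp_all add: comp_def)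
  have conts: "isCont g xstar" "isCont J xstar" "isCont r xstar"
    using g_cont J_cont convex_on_continuous[OF open_UNIV r_convex]
    by (simp_all add: continuous_on_eq_continuous_at)
  have "fst l \<in> subdiff r xstar"
  proof (rule subdiff_limit[OF conts(3) _ grH])
    show "(\<lambda>j. x (H j) + s (H j)) \<longlonglongrightarrow> xstar"
      using tendsto_add[OF xH sH] by simp
  qed (rule gr)
  moreover have "(\<lambda>j. g (x (H j)) + (1 / \<alpha> (H j)) *\<^sub>R u (H j) + gr (H j) - transpose (J (x (H j))) *v y (H j))
      \<longlonglongrightarrow> g xstar + 0 + fst l - transpose (J xstar) *v snd l"
    using isCont_tendsto_compose[OF conts(1) xH] uH grH
      tendsto_transpose_matrix_vector_mult[OF isCont_tendsto_compose[OF conts(2) xH] yH]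
    by (intro tendsto_add tendsto_diff)
  then have "g xstar + fst l - transpose (J xstar) *v snd l = 0"
    by (simp add: y LIMSEQ_const_iff)
  ultimately show ?thesis
    by blast
qed

end

theorem theorem3p18:
  fixes f :: "real^'n \<Rightarrow> real" and g :: "real^'n \<Rightarrow> real^'n"
    and c :: "real^'n \<Rightarrow> real^'m" and J :: "real^'n \<Rightarrow> real^'n^'m"
    and r :: "real^'n \<Rightarrow> real"
    and \<kappa>v \<sigma>c \<epsilon>\<tau> \<xi> \<eta> \<sigma>u \<tau>init \<sigma>min :: real
    and x v u s :: "nat \<Rightarrow> real^'n" and \<alpha> \<tau> :: "nat \<Rightarrow> real"
    and X :: "(real^'n) set" and xstar :: "real^'n"
  assumes dims: "CARD('m) \<le> CARD('n)"
    and f_deriv: "\<And>z. (f has_derivative (\<lambda>h. g z \<bullet> h)) (at z)"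
    and g_cont: "continuous_on UNIV g"
    and c_deriv: "\<And>z. (c has_derivative (\<lambda>h. J z *v h)) (at z)"
    and J_cont: "continuous_on UNIV J"
    and r_convex: "convex_on UNIV r"
    and r_nonneg: "\<And>z. r z \<ge> 0"
    and \<kappa>v_pos: "\<kappa>v > 0"
    and \<sigma>c: "0 < \<sigma>c" "\<sigma>c < 1"
    and \<epsilon>\<tau>: "0 < \<epsilon>\<tau>" "\<epsilon>\<tau> < 1"
    and \<xi>: "0 < \<xi>" "\<xi> < 1"
    and \<eta>: "0 < \<eta>" "\<eta> < 1"
    and \<sigma>u: "0 < \<sigma>u" "\<sigma>u \<le> 1/2"
    and \<alpha>0: "\<alpha> 0 > 0"
    and \<tau>init: "\<tau>init > 0"
    and step1a: "\<And>k. transpose (J (x k)) *v c (x k) \<noteq> 0 \<Longrightarrow>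
        (\<exists>w. v k = transpose (J (x k)) *v w)
      \<and> norm (v k) \<le> \<kappa>v * \<alpha> k * norm (transpose (J (x k)) *v c (x k))
      \<and> (\<exists>\<beta>c. 0 \<le> \<beta>c \<and> \<beta>c \<le> \<kappa>v * \<alpha> k
           \<and> (\<forall>\<beta>. 0 \<le> \<beta> \<and> \<beta> \<le> \<kappa>v * \<alpha> k \<longrightarrow>
                 (1/2) * norm (c (x k) - \<beta>c *\<^sub>R (J (x k) *v (transpose (J (x k)) *v c (x k)))) ^ 2
               \<le> (1/2) * norm (c (x k) - \<beta> *\<^sub>R (J (x k) *v (transpose (J (x k)) *v c (x k)))) ^ 2)
           \<and> norm (c (x k) + J (x k) *v v k)
             \<le> norm (c (x k) + J (x k) *v (- \<beta>c *\<^sub>R (transpose (J (x k)) *v c (x k)))))"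
    and step1b: "\<And>k. transpose (J (x k)) *v c (x k) = 0 \<Longrightarrow> v k = 0 \<and> c (x k) = 0"
    and step2: "\<And>k. J (x k) *v u k = 0
      \<and> (\<forall>w. J (x k) *v w = 0 \<longrightarrow>
            g (x k) \<bullet> u k + norm (u k) ^ 2 / (2 * \<alpha> k) + r (x k + v k + u k)
          \<le> g (x k) \<bullet> w + norm w ^ 2 / (2 * \<alpha> k) + r (x k + v k + w))"
    and s_def: "\<And>k. s k = v k + u k"
    and s_nz: "\<And>k. s k \<noteq> 0"
    and step3: "\<And>k. (let \<tau>prev = (if k = 0 then \<tau>init else \<tau> (k - 1));
                        D = g (x k) \<bullet> s k + (\<sigma>u + 1/2) * norm (s k) ^ 2 / \<alpha> k
                            + r (x k + s k) - r (x k);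
                        t = (1 - \<sigma>c) * (norm (c (x k)) - norm (c (x k) + J (x k) *v v k)) / D
                    in \<tau> k = (if D \<le> 0 \<or> \<tau>prev \<le> t then \<tau>prev
                              else min ((1 - \<epsilon>\<tau>) * \<tau>prev) t))"
    and step4: "\<And>k. (if merit f r c (\<tau> k) (x k + s k)
                           \<le> merit f r c (\<tau> k) (x k) - \<eta> * dq r c (x k) (g (x k)) (J (x k)) (\<alpha> k) (s k) (\<tau> k)
                      then x (Suc k) = x k + s k \<and> \<alpha> (Suc k) = \<alpha> k
                      else x (Suc k) = x k \<and> \<alpha> (Suc k) = \<xi> * \<alpha> k)"
    and X_open: "open X" and X_convex: "convex X"
    and X_iter: "\<And>k. x k \<in> X \<and> x k + s k \<in> X"
    and f_bdd: "bdd_below (f ` X)"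
    and g_bdd: "\<exists>B. \<forall>z\<in>X. norm (g z) \<le> B"
    and g_lip: "\<exists>L. \<forall>y\<in>X. \<forall>z\<in>X. norm (g y - g z) \<le> L * norm (y - z)"
    and c_bdd: "\<exists>B. \<forall>z\<in>X. norm (c z) \<le> B"
    and J_bdd: "\<exists>B. \<forall>z\<in>X. norm (J z) \<le> B"
    and J_lip: "\<exists>L. \<forall>y\<in>X. \<forall>z\<in>X. norm (J y - J z) \<le> L * norm (y - z)"
    and subgrad_bdd: "\<exists>B. \<forall>z\<in>X. \<forall>gr\<in>subdiff r z. norm gr \<le> B"
    and \<sigma>min_pos: "\<sigma>min > 0"
    and \<sigma>min_bd: "\<And>k. sigma_min_sv (J (x k)) \<ge> \<sigma>min"
    and limpt: "\<exists>h. strict_mono h \<and> (x \<circ> h) \<longlonglongrightarrow> xstar"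
  shows "c xstar = 0 \<and>
         (\<exists>ystar :: real^'m. \<exists>grstar \<in> subdiff r xstar.
            g xstar + grstar - transpose (J xstar) *v ystar = 0)"
proof -
  obtain G where G: "\<And>z. z \<in> X \<Longrightarrow> norm (g z) \<le> G"
    using g_bdd by blast
  obtain R where R: "\<And>z gr. z \<in> X \<Longrightarrow> gr \<in> subdiff r z \<Longrightarrow> norm gr \<le> R"
    using subgrad_bdd by blast
  obtain C where C: "\<And>z. z \<in> X \<Longrightarrow> norm (c z) \<le> C"
    using c_bdd by blast
  obtain JB where JB: "\<And>z. z \<in> X \<Longrightarrow> norm (J z) \<le> JB"
    using J_bdd by blast
  obtain Lg LJ where Lg: "Lg-lipschitz_on X g" and LJ: "LJ-lipschitz_on X J"
    using g_lip J_lip lipschitz_on_max_0 by metis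
  obtain f_low where f_low: "\<And>z. z \<in> X \<Longrightarrow> f_low \<le> f z"
    using f_bdd by (auto simp: bdd_below_def)
  have stationary_feasible: "\<And>k. transpose (J (x k)) *v c (x k) = 0 \<Longrightarrow> c (x k) = 0"
    using step1b by blast
  note normal_step = normal_step_properties[OF step1a step1b]
  interpret prox_sqp_run f g c J r \<kappa>v \<sigma>c \<epsilon>\<tau> \<xi> \<eta> \<sigma>u \<tau>init \<sigma>min x v u s \<alpha> \<tau> X f_low G R C JB Lg LJ
    by unfold_locales (fact assms G R C JB Lg LJ f_low stationary_feasible | rule normal_step; assumption)+
  obtain h where "strict_mono h" "(x \<circ> h) \<longlonglongrightarrow> xstar"
    using limpt by blast
  then show ?thesis
    using limit_point_feasible limit_point_stationary by blast
qed

end
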